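(* Let $G$ be a finite simple graph, $k\ge 2$, and let $e=\{a,b\}$ be an edge of $G$. Suppose that for every $k$-matching $\{e_1,\ldots,e_k\}$ of $G-e$ there exist a vertex $c\notin\{a,b\}$ with $\{c,a\}\in E(G)$ or $\{c,b\}\in E(G)$, and an index $j$ with $c\in e_j$ and $e_1\cdots \widehat{e_j}\cdots e_k\in I(G-\{a,b\})^{[k-1]}$. Then the ideal $L(G,e,k):=I(G-e)^{[k]}\cap (ab)\,I(G-\{a,b\})^{[k-1]}$ is generated in degree $2k+1$, i.e. all its minimal monomial generators have degree $2k+1$.
   Context: $G$ is a finite simple graph on vertex set $\{x_1,\ldots,x_n\}$ identified with the variables of $S=K[x_1,\ldots,x_n]$ ($K$ a field); edges are identified with degree-2 monomials. For a graph $H$, $I(H)^{[k]}$ is the ideal generated by all products $e_1\cdots e_k$ over $k$-matchings of $H$. $G-e$ is the graph on the same vertex set as $G$ with the edge $e$ removed; $G-\{a,b\}$ is the induced subgraph on $V(G)\setminus\{a,b\}$. The hat denotes omission of a factor. *)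

theory Defs
  imports Main "HOL-Library.Multiset"
begin

definition simple_graph :: "'a set \<Rightarrow> 'a set set \<Rightarrow> bool" where
  "simple_graph V E \<longleftrightarrow> finite V \<and> (\<forall>f\<in>E. f \<subseteq> V \<and> card f = 2)"

text \<open>Monomials in the variables V are multisets over V (exponent vectors);
  the product of monomials is multiset sum, divisibility is sub-multiset,
  the degree is the size.\<close>
definition monomials :: "'a set \<Rightarrow> 'a multiset set" where
  "monomials V = {m. set_mset m \<subseteq> V}"

definition edge_mon :: "'a set \<Rightarrow> 'a multiset" where
  "edge_mon f = mset_set f"

definition is_matching :: "'a set set \<Rightarrow> 'a set set \<Rightarrow> nat \<Rightarrow> bool" where
  "is_matching E M k \<longleftrightarrow> M \<subseteq> E \<and> finite M \<and> card M = k \<and>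
     (\<forall>f\<in>M. \<forall>g\<in>M. f \<noteq> g \<longrightarrow> f \<inter> g = {})"

definition matching_prod :: "'a set set \<Rightarrow> 'a multiset" where
  "matching_prod M = (\<Sum>f\<in>M. edge_mon f)"

text \<open>The monomial ideal I(H)^[k] of S = K[V], represented by the set of
  monomials it contains (a monomial ideal is determined by its monomials).\<close>
definition sq_power_mons :: "'a set \<Rightarrow> 'a set set \<Rightarrow> nat \<Rightarrow> 'a multiset set" where
  "sq_power_mons V E k =
     {m \<in> monomials V. \<exists>M. is_matching E M k \<and> matching_prod M \<subseteq># m}"

definition del_edge :: "'a set set \<Rightarrow> 'a set \<Rightarrow> 'a set set" where
  "del_edge E e = E - {e}"

definition del_verts_edges :: "'a set set \<Rightarrow> 'a set \<Rightarrow> 'a set set" where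
  "del_verts_edges E W = {f \<in> E. f \<inter> W = {}}"

definition L_mons :: "'a set \<Rightarrow> 'a set set \<Rightarrow> 'a \<Rightarrow> 'a \<Rightarrow> nat \<Rightarrow> 'a multiset set" where
  "L_mons V E a b k =
     sq_power_mons V (del_edge E {a,b}) k \<inter>
     {m \<in> monomials V. \<exists>n \<in> sq_power_mons V (del_verts_edges E {a,b}) (k - 1).
                          {#a, b#} + n \<subseteq># m}"

definition min_gens :: "'a multiset set \<Rightarrow> 'a multiset set" where
  "min_gens I = {m \<in> I. \<forall>m'\<in>I. m' \<subseteq># m \<longrightarrow> m' = m}"

end

theory Submission
  imports Defs
begin

text \<open>Let \<open>m\<close> be a minimal generator of \<open>L(G,e,k)\<close>, divisible by the product of a
  \<open>k\<close>-matching \<open>e\<^sub>1, \<dots>, e\<^sub>k\<close> of \<open>G - e\<close> and by \<open>ab\<close>. With \<open>c \<in> e\<^sub>j\<close> as in the hypothesis,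
  the remaining edges are divisible by the product \<open>w\<close> of a \<open>(k-1)\<close>-matching of
  \<open>G - {a,b}\<close>, which avoids \<open>a\<close>, \<open>b\<close> and \<open>c\<close>. Hence \<open>w\<cdot>abc\<close> divides \<open>m\<close>; and it lies in
  \<open>L(G,e,k)\<close>, being divisible by \<open>ab\<cdot>w\<close> and by the product of the \<open>k\<close>-matching obtained
  from that of \<open>w\<close> by adding the edge \<open>ca\<close> (or \<open>cb\<close>). By minimality \<open>m = w\<cdot>abc\<close>, of degree
  \<open>2(k-1) + 3\<close>.\<close>

lemma simple_graph_edgeD:
  assumes "simple_graph V E" "f \<in> E"
  shows "f \<subseteq> V" "card f = 2" "finite f"
  using assms unfolding simple_graph_def by (auto intro: card_ge_0_finite)

lemma simple_graph_edge_neq: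
  assumes "simple_graph V E" "{x, y} \<in> E"
  shows "x \<noteq> y"
  using simple_graph_edgeD(2)[OF assms] by (cases "x = y") auto

lemma edge_mon_doubleton: "x \<noteq> y \<Longrightarrow> edge_mon {x, y} = {#x, y#}"
  by (simp add: edge_mon_def)

lemma set_mset_matching_prod:
  assumes "finite M" "\<forall>f\<in>M. finite f"
  shows "set_mset (matching_prod M) = \<Union>M"
  using assms unfolding matching_prod_def
  by (induction M rule: finite_induct) (auto simp: edge_mon_def)

lemma size_matching_prod:
  assumes "finite M" "\<forall>f\<in>M. card f = 2"
  shows "size (matching_prod M) = 2 * card M"
  using assms unfolding matching_prod_def
  by (induction M rule: finite_induct) (auto simp: edge_mon_def card_ge_0_finite)

lemma matching_prod_insert:
  "finite M \<Longrightarrow> f \<notin> M \<Longrightarrow> matching_prod (insert f M) = edge_mon f + matching_prod M"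
  unfolding matching_prod_def by simp

lemma matching_prod_mono:
  assumes "M' \<subseteq> M" "finite M"
  shows "matching_prod M' \<subseteq># matching_prod M"
  using sum.subset_diff[OF assms, of edge_mon] unfolding matching_prod_def by simp

lemma mem_matching_prod:
  assumes "finite M" "f \<in> M" "finite f" "x \<in> f"
  shows "x \<in># matching_prod M"
proof -
  have "edge_mon f \<subseteq># matching_prod M"
    using matching_prod_mono[of "{f}" M] assms(1,2) by (simp add: matching_prod_def)
  then show ?thesis using assms(3,4) by (auto simp: edge_mon_def dest: mset_subset_eqD)
qed

lemma not_in_matching_prod_remove:
  assumes M: "is_matching E M k" and "\<forall>g\<in>E. finite g" and f: "f \<in> M" "x \<in> f"
  shows "x \<notin># matching_prod (M - {f})"
proof -
  have "M \<subseteq> E" "finite M" and disj: "\<forall>g\<in>M. \<forall>h\<in>M. g \<noteq> h \<longrightarrow> g \<inter> h = {}"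
    using M unfolding is_matching_def by auto
  then have "set_mset (matching_prod (M - {f})) = \<Union>(M - {f})"
    using assms(2) by (intro set_mset_matching_prod) auto
  moreover have "x \<notin> \<Union>(M - {f})" using disj f by blast
  ultimately show ?thesis by simp
qed

lemma is_matching_insert:
  assumes M: "is_matching E M k" and f: "f \<in> E" "f \<noteq> {}" "f \<inter> \<Union>M = {}"
  shows "is_matching E (insert f M) (Suc k)"
proof -
  have "f \<notin> M" using f(2,3) by blast
  moreover have "\<forall>g\<in>M. f \<inter> g = {} \<and> g \<inter> f = {}" using f(3) by blast
  ultimately show ?thesis using M f(1) unfolding is_matching_def by (simp add: Int_commute)
qed

lemma add_mset_subset_eq_if_not_in:
  assumes "A \<subseteq># B" "x \<in># B" "x \<notin># A"
  shows "add_mset x A \<subseteq># B"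
  using assms by (auto simp: subseteq_mset_def not_in_iff Suc_leI)

lemma L_mons_mem_ends:
  assumes "m \<in> L_mons V E a b k"
  shows "a \<in># m" "b \<in># m"
proof -
  obtain n where "{#a, b#} + n \<subseteq># m" using assms unfolding L_mons_def by auto
  then have "{#a, b#} \<subseteq># m" using mset_subset_eq_add_left subset_mset.order_trans by blast
  then show "a \<in># m" "b \<in># m" by (auto dest: mset_subset_eqD)
qed

lemma L_mons_swap: "L_mons V E b a k = L_mons V E a b k"
  unfolding L_mons_def by (simp add: insert_commute add_mset_commute)

lemma matching_prod_add_neighbour_of_a_in_L_mons:
  assumes G: "simple_graph V E" and ab: "{a, b} \<in> E" and ca: "{c, a} \<in> E" and "c \<notin> {a, b}"
    and N: "is_matching (del_verts_edges E {a, b}) N (k - 1)" "c \<notin> \<Union>N" and "k \<ge> 1"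
  shows "matching_prod N + {#a, b, c#} \<in> L_mons V E a b k"
proof -
  have NE: "N \<subseteq> E" and "finite N" and "a \<notin> \<Union>N"
    using N unfolding is_matching_def del_verts_edges_def by auto
  have mon: "matching_prod N + {#a, b, c#} \<in> monomials V"
    using simple_graph_edgeD(1,3)[OF G] NE ab ca \<open>finite N\<close>
    by (auto simp: monomials_def set_mset_matching_prod subset_iff)
  have "is_matching (del_edge E {a, b}) (insert {c, a} N) k"
  proof -
    have "is_matching (del_edge E {a, b}) N (k - 1)"
      using N unfolding is_matching_def del_edge_def del_verts_edges_def by auto
    moreover have "{c, a} \<in> del_edge E {a, b}"
      using ca \<open>c \<notin> {a, b}\<close> by (auto simp: del_edge_def doubleton_eq_iff)
    moreover have "{c, a} \<inter> \<Union>N = {}" using \<open>a \<notin> \<Union>N\<close> \<open>c \<notin> \<Union>N\<close> by auto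
    ultimately have "is_matching (del_edge E {a, b}) (insert {c, a} N) (Suc (k - 1))"
      by (simp add: is_matching_insert)
    then show ?thesis using \<open>k \<ge> 1\<close> by simp
  qed
  moreover have "matching_prod (insert {c, a} N) = {#c, a#} + matching_prod N"
  proof -
    have "{c, a} \<notin> N" using \<open>a \<notin> \<Union>N\<close> by auto
    with \<open>finite N\<close> have "matching_prod (insert {c, a} N) = edge_mon {c, a} + matching_prod N"
      by (rule matching_prod_insert)
    moreover have "c \<noteq> a" using \<open>c \<notin> {a, b}\<close> by auto
    ultimately show ?thesis by (simp add: edge_mon_doubleton)
  qed
  moreover have "{#c, a#} + matching_prod N \<subseteq># matching_prod N + {#a, b, c#}"
    by (simp add: add_mset_commute)
  ultimately have "matching_prod N + {#a, b, c#} \<in> sq_power_mons V (del_edge E {a, b}) k"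
    using mon unfolding sq_power_mons_def by auto
  moreover have "matching_prod N \<in> sq_power_mons V (del_verts_edges E {a, b}) (k - 1)"
    using mon N unfolding sq_power_mons_def monomials_def by auto
  moreover have "{#a, b#} + matching_prod N \<subseteq># matching_prod N + {#a, b, c#}"
    by (simp add: add_mset_commute)
  ultimately show ?thesis
    using mon unfolding L_mons_def by blast
qed

lemma matching_prod_add_neighbour_in_L_mons:
  assumes G: "simple_graph V E" and ab: "{a, b} \<in> E"
    and c: "c \<notin> {a, b}" "{c, a} \<in> E \<or> {c, b} \<in> E"
    and N: "is_matching (del_verts_edges E {a, b}) N (k - 1)" "c \<notin> \<Union>N" and "k \<ge> 1"
  shows "matching_prod N + {#a, b, c#} \<in> L_mons V E a b k"
  using c(2)
proof
  assume "{c, a} \<in> E"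
  with G ab show ?thesis using c(1) N \<open>k \<ge> 1\<close> by (rule matching_prod_add_neighbour_of_a_in_L_mons)
next
  assume "{c, b} \<in> E"
  then have "matching_prod N + {#b, a, c#} \<in> L_mons V E b a k"
    using matching_prod_add_neighbour_of_a_in_L_mons[of V E b a c N k] G ab c(1) N \<open>k \<ge> 1\<close>
    by (simp add: insert_commute)
  then show ?thesis by (simp add: L_mons_swap add_mset_commute)
qed

lemma size_min_gens_L_mons:
  assumes G: "simple_graph V E" and ab: "{a, b} \<in> E"
    and c: "c \<notin> {a, b}" "{c, a} \<in> E \<or> {c, b} \<in> E"
    and m: "m \<in> min_gens (L_mons V E a b k)"
    and M: "is_matching (del_edge E {a, b}) M k" "matching_prod M \<subseteq># m"
    and f: "f \<in> M" "c \<in> f"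
    and rest: "matching_prod (M - {f}) \<in> sq_power_mons V (del_verts_edges E {a, b}) (k - 1)"
    and "k \<ge> 1"
  shows "size m = 2 * k + 1"
proof -
  obtain N where N: "is_matching (del_verts_edges E {a, b}) N (k - 1)"
    and N_sub: "matching_prod N \<subseteq># matching_prod (M - {f})"
    using rest unfolding sq_power_mons_def by auto
  define w where "w = matching_prod N"
  have m_L: "m \<in> L_mons V E a b k"
    and m_min: "\<And>m'. m' \<in> L_mons V E a b k \<Longrightarrow> m' \<subseteq># m \<Longrightarrow> m' = m"
    using m unfolding min_gens_def by auto
  have NE: "N \<subseteq> E" and "finite N" "card N = k - 1" and "a \<notin> \<Union>N" "b \<notin> \<Union>N"
    using N unfolding is_matching_def del_verts_edges_def by auto
  have "finite M" using M(1) unfolding is_matching_def by simp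
  have edges_finite: "\<forall>g\<in>E. finite g" using simple_graph_edgeD(3)[OF G] by blast
  have set_w: "set_mset w = \<Union>N"
    unfolding w_def using NE \<open>finite N\<close> edges_finite by (simp add: set_mset_matching_prod subset_iff)
  have w_sub: "w \<subseteq># matching_prod M"
    using N_sub matching_prod_mono[of "M - {f}" M] \<open>finite M\<close> unfolding w_def
    by (meson Diff_subset subset_mset.order_trans)
  have "c \<notin># w"
    using not_in_matching_prod_remove[OF M(1) _ f] edges_finite N_sub unfolding w_def
    by (auto simp: del_edge_def dest: mset_subset_eqD)
  then have "c \<notin> \<Union>N" using set_w by simp
  have "w + {#a, b, c#} \<subseteq># m"
  proof -
    have "a \<in># m" "b \<in># m" using m_L by (rule L_mons_mem_ends)+
    moreover have "c \<in># matching_prod M"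
      using f M(1) edges_finite \<open>finite M\<close>
      by (intro mem_matching_prod) (auto simp: is_matching_def del_edge_def)
    moreover have "a \<noteq> b" by (rule simple_graph_edge_neq[OF G ab])
    moreover have "a \<notin># w" "b \<notin># w" using set_w \<open>a \<notin> \<Union>N\<close> \<open>b \<notin> \<Union>N\<close> by simp_all
    ultimately have "add_mset a (add_mset b (add_mset c w)) \<subseteq># m"
      using c(1) \<open>c \<notin># w\<close> w_sub M(2)
      by (intro add_mset_subset_eq_if_not_in) (auto dest: mset_subset_eqD)
    then show ?thesis by simp
  qed
  then have "m = w + {#a, b, c#}"
    using m_min matching_prod_add_neighbour_in_L_mons[OF G ab c N \<open>c \<notin> \<Union>N\<close> \<open>k \<ge> 1\<close>]
    unfolding w_def by auto
  moreover have "size w = 2 * (k - 1)"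
    using size_matching_prod[OF \<open>finite N\<close>] NE simple_graph_edgeD(2)[OF G] \<open>card N = k - 1\<close>
    by (auto simp: w_def)
  ultimately show ?thesis using \<open>k \<ge> 1\<close> by simp
qed

theorem lemma4p2:
  fixes V :: "'a set" and E :: "'a set set" and a b :: 'a and k :: nat
  assumes "simple_graph V E"
    and "k \<ge> 2"
    and "{a, b} \<in> E"
    and "\<forall>M. is_matching (del_edge E {a,b}) M k \<longrightarrow>
           (\<exists>c. c \<notin> {a, b} \<and> ({c, a} \<in> E \<or> {c, b} \<in> E) \<and>
               (\<exists>f\<in>M. c \<in> f \<and>
                  matching_prod (M - {f}) \<in>
                    sq_power_mons V (del_verts_edges E {a,b}) (k - 1)))"
  shows "\<forall>m \<in> min_gens (L_mons V E a b k). size m = 2 * k + 1"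
proof
  fix m assume m: "m \<in> min_gens (L_mons V E a b k)"
  then have "m \<in> sq_power_mons V (del_edge E {a, b}) k"
    unfolding min_gens_def L_mons_def by auto
  then obtain M where M: "is_matching (del_edge E {a, b}) M k" "matching_prod M \<subseteq># m"
    unfolding sq_power_mons_def by auto
  with assms(4) obtain c f where "c \<notin> {a, b}" "{c, a} \<in> E \<or> {c, b} \<in> E" "f \<in> M" "c \<in> f"
    "matching_prod (M - {f}) \<in> sq_power_mons V (del_verts_edges E {a, b}) (k - 1)"
    by blast
  with size_min_gens_L_mons[OF assms(1,3) _ _ m M] assms(2) show "size m = 2 * k + 1" by simp
qed

end
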